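(* Let $\mathcal H$ be a set, $\mathcal Z$ a space with an unknown distribution $\mathcal D_Z$, and $b_0<b_1<\cdots<b_K$ real numbers with $K\ge1$. Let $f:\mathcal H\times\mathcal Z\to\{b_0,\dots,b_K\}$, and for $j\in\{1,\dots,K\}$ let $\alpha_j=b_j-b_{j-1}$, $f_j(h,z)=\mathbf 1[f(h,z)\ge b_j]$, $F(h)=\mathbb{E}_{Z\sim\mathcal D_Z}[f(h,Z)]$. Let $S=\{Z_1,\dots,Z_n\}$ be an i.i.d. sample from $\mathcal D_Z$ and $\hat F_j(h,S)=\frac1n\sum_{i=1}^nf_j(h,Z_i)$. Then for any probability distribution $\pi$ on $\mathcal H$ that is independent of $S$ and any $\delta\in(0,1)$, \[ \mathbb{P}\left[\exists\rho\in\mathcal P:\ \mathbb{E}_{h\sim\rho}[F(h)]\ge b_0+\sum_{j=1}^K\alpha_j\,\mathrm{kl}^{-1,+}\left(\mathbb{E}_{h\sim\rho}[\hat F_j(h,S)],\frac{\mathrm{KL}(\rho\|\pi)+\ln\frac{2K\sqrt n}{\delta}}{n}\right)\right]\le\delta, \] where $\mathcal P$ is the set of all probability distributions on $\mathcal H$, including those that depend on $S$.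
   Context: $\mathrm{KL}(\rho\|\pi)$ is the Kullback–Leibler divergence. For $p,q\in[0,1]$, $\mathrm{kl}(p\|q)=p\ln\frac pq+(1-p)\ln\frac{1-p}{1-q}$ and $\mathrm{kl}^{-1,+}(\hat p,\varepsilon)=\max\{p\in[0,1]:\mathrm{kl}(\hat p\|p)\le\varepsilon\}$. *)

theory Defs
  imports "HOL-Probability.Probability"
begin

definition kl_bin :: "real \<Rightarrow> real \<Rightarrow> ereal" where
  "kl_bin p q =
     (if p = 0 then 0 else if q = 0 then \<infinity> else ereal (p * ln (p / q))) +
     (if p = 1 then 0 else if q = 1 then \<infinity> else ereal ((1 - p) * ln ((1 - p) / (1 - q))))"

definition kl_inv_plus :: "real \<Rightarrow> ereal \<Rightarrow> real" where
  "kl_inv_plus phat eps = Sup {p \<in> {0..1}. kl_bin phat p \<le> eps}"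

definition KL_div :: "'a measure \<Rightarrow> 'a measure \<Rightarrow> ereal" where
  "KL_div \<rho> \<pi> =
     (if absolutely_continuous \<pi> \<rho> \<and> integrable \<rho> (\<lambda>x. ln (enn2real (RN_deriv \<pi> \<rho> x)))
      then ereal (\<integral>x. ln (enn2real (RN_deriv \<pi> \<rho> x)) \<partial>\<rho>)
      else \<infinity>)"

definition prob_dists :: "'a measure \<Rightarrow> 'a measure set" where
  "prob_dists MH = {\<rho>. prob_space \<rho> \<and> sets \<rho> = sets MH}"

end

theory Submission
  imports Defs
begin

text \<open>Write \<open>q\<^sub>j(h, S)\<close> and \<open>p\<^sub>j(h)\<close> for the empirical and true frequency of the event
  \<open>f(h, z) \<ge> b\<^sub>j\<close>.  By Maurer's lemma \<open>E\<^sub>S exp (n kl(q\<^sub>j(h, S) \<parallel> p\<^sub>j(h))) \<le> 2 \<surd>n\<close> for every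
  \<open>h\<close>; with Fubini and Markov's inequality, \<open>Z\<^sub>j(S) = E\<^sub>\<pi> exp (n kl(q\<^sub>j \<parallel> p\<^sub>j)) \<le> 2K\<surd>n/\<delta>\<close>
  outside an event of probability \<open>\<delta>/K\<close>.  On its complement, the Donsker--Varadhan change
  of measure and the joint convexity of kl give, simultaneously for all posteriors \<open>\<rho>\<close>,
  \<open>n kl(E\<^sub>\<rho> q\<^sub>j \<parallel> E\<^sub>\<rho> p\<^sub>j) \<le> KL(\<rho>\<parallel>\<pi>) + ln Z\<^sub>j\<close>, i.e. \<open>E\<^sub>\<rho> p\<^sub>j \<le> kl\<^bsup>-1,+\<^esup>(E\<^sub>\<rho> q\<^sub>j, \<epsilon>)\<close>.
  A union bound over \<open>j\<close> and the decomposition \<open>f = b\<^sub>0 + \<Sum>\<^sub>j \<alpha>\<^sub>j f\<^sub>j\<close> finish the proof.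

  Maurer's lemma reduces to \<open>\<xi>(n) = \<Sum>\<^sub>k C(n,k) (k/n)\<^sup>k (1 - k/n)\<^bsup>n-k\<^esup> \<le> 2 \<surd>n\<close>.  The middle terms are
  bounded by \<open>e\<^bsup>-11/12\<^esup> \<surd>n / \<surd>(k(n - k))\<close> using Stirling-type bounds on \<open>ln k!\<close>, and
  \<open>\<Sum>\<^sub>k 1/\<surd>(k(n - k)) \<le> pi\<close> by comparison with an arcsine integral.\<close>

lemma artanh_ge_self:
  fixes x :: real
  assumes "0 \<le> x" "x < 1"
  shows "x \<le> artanh x"
proof -
  have "(\<lambda>t. artanh t - t) 0 \<le> (\<lambda>t. artanh t - t) x"
  proof (rule DERIV_nonneg_imp_nondecreasing[OF assms(1)])
    fix t :: real assume "0 \<le> t" "t \<le> x"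
    then have t: "\<bar>t\<bar> < 1" "t\<^sup>2 < 1" using assms by (auto simp: abs_square_less_1)
    have "((\<lambda>t. artanh t - t) has_real_derivative 1 / (1 - t\<^sup>2) - 1) (at t)"
      using t by (auto intro!: derivative_eq_intros)
    moreover have "0 \<le> 1 / (1 - t\<^sup>2) - 1"
      using t by (simp add: field_simps)
    ultimately show "\<exists>y. ((\<lambda>t. artanh t - t) has_real_derivative y) (at t) \<and> 0 \<le> y"
      by blast
  qed
  then show ?thesis by simp
qed

lemma artanh_le:
  fixes x :: real
  assumes "0 \<le> x" "x < 1"
  shows "artanh x \<le> x + x ^ 3 / (3 * (1 - x\<^sup>2))"
proof -
  let ?u = "\<lambda>t::real. t + t ^ 3 / (3 * (1 - t\<^sup>2)) - artanh t"
  have "?u 0 \<le> ?u x"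
  proof (rule DERIV_nonneg_imp_nondecreasing[OF assms(1)])
    fix t :: real assume "0 \<le> t" "t \<le> x"
    then have t: "\<bar>t\<bar> < 1" "t\<^sup>2 < 1" using assms by (auto simp: abs_square_less_1)
    have "1 - t\<^sup>2 \<noteq> 0" using t by simp
    then have "(?u has_real_derivative 2 * t ^ 4 / (3 * (1 - t\<^sup>2)\<^sup>2)) (at t)"
      using t by (auto intro!: derivative_eq_intros)
        (simp add: divide_simps; simp add: algebra_simps power2_eq_square power4_eq_xxxx eval_nat_numeral)
    then show "\<exists>y. (?u has_real_derivative y) (at t) \<and> 0 \<le> y"
      by fastforce
  qed
  then show ?thesis by simp
qed

definition stirling_remainder :: "nat \<Rightarrow> real" where
  "stirling_remainder m = ln (fact m) + real m - (real m + 1/2) * ln (real m)"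

lemma stirling_remainder_diff:
  assumes "m \<ge> 1"
  shows "stirling_remainder m - stirling_remainder (Suc m)
           = (2 * real m + 1) * artanh (1 / (2 * real m + 1)) - 1"
proof -
  have m: "real m > 0" using assms by simp
  have ratio: "(1 + 1 / (2 * real m + 1)) / (1 - 1 / (2 * real m + 1)) = (real m + 1) / real m"
    using m by (simp add: divide_simps)
  have "(2 * real m + 1) * artanh (1 / (2 * real m + 1))
          = (real m + 1/2) * (2 * artanh (1 / (2 * real m + 1)))"
    by (simp add: algebra_simps)
  also have "2 * artanh (1 / (2 * real m + 1)) = ln (real m + 1) - ln (real m)"
    using m ratio by (simp add: artanh_def ln_div)
  finally have "(2 * real m + 1) * artanh (1 / (2 * real m + 1))
                  = (real m + 1/2) * (ln (real m + 1) - ln (real m))" .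
  moreover have "ln (fact (Suc m)) = ln (real m + 1) + ln (fact m)"
    by (simp add: ln_mult add.commute)
  ultimately show ?thesis
    unfolding stirling_remainder_def by (simp add: algebra_simps)
qed

lemma stirling_remainder_Suc_le:
  assumes "m \<ge> 1"
  shows "stirling_remainder (Suc m) \<le> stirling_remainder m"
proof -
  have "1 = (2 * real m + 1) * (1 / (2 * real m + 1))" by simp
  also have "\<dots> \<le> (2 * real m + 1) * artanh (1 / (2 * real m + 1))"
    using assms by (intro mult_left_mono artanh_ge_self) auto
  finally show ?thesis using stirling_remainder_diff[OF assms] by simp
qed

lemma stirling_remainder_Suc_ge:
  assumes "m \<ge> 1"
  shows "stirling_remainder m - 1 / (12 * real m)
           \<le> stirling_remainder (Suc m) - 1 / (12 * (real m + 1))"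
proof -
  define x where "x = 1 / (2 * real m + 1)"
  have m: "real m > 0" using assms by simp
  have x: "0 < x" "x < 1" using m by (auto simp: x_def)
  have inv: "(2 * real m + 1) * x = 1" using m by (simp add: x_def)
  have "1 - x\<^sup>2 = ((2 * real m + 1) * x)\<^sup>2 - x\<^sup>2"
    by (simp add: inv)
  also have "\<dots> = 4 * real m * (real m + 1) * x\<^sup>2"
    by (simp add: algebra_simps power2_eq_square)
  finally have one_minus: "1 - x\<^sup>2 = 4 * real m * (real m + 1) * x\<^sup>2" .
  have "(2 * real m + 1) * artanh x \<le> (2 * real m + 1) * (x + x ^ 3 / (3 * (1 - x\<^sup>2)))"
    using x by (intro mult_left_mono artanh_le) auto
  also have "x ^ 3 / (3 * (1 - x\<^sup>2)) = x / (12 * real m * (real m + 1))"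
    using m x unfolding one_minus by (simp add: divide_simps power2_eq_square power3_eq_cube)
  also have "(2 * real m + 1) * (x + x / (12 * real m * (real m + 1)))
               = (2 * real m + 1) * x * (1 + 1 / (12 * real m * (real m + 1)))"
    by (simp add: algebra_simps)
  also have "\<dots> = 1 + 1 / (12 * real m * (real m + 1))"
    by (simp add: inv)
  also have "\<dots> = 1 + 1 / (12 * real m) - 1 / (12 * (real m + 1))"
    using m by (simp add: diff_frac_eq)
  finally show ?thesis
    using stirling_remainder_diff[OF assms] by (simp add: x_def)
qed

lemma stirling_remainder_antimono:
  assumes "1 \<le> i" "i \<le> j"
  shows "stirling_remainder j \<le> stirling_remainder i"
  using assms(2)
proof (induction j rule: dec_induct)
  case (step j)
  then show ?case using stirling_remainder_Suc_le[of j] assms(1) by simp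
qed simp

lemma stirling_remainder_ge:
  assumes "m \<ge> 1"
  shows "11/12 \<le> stirling_remainder m"
proof -
  have "stirling_remainder 1 - 1/12 \<le> stirling_remainder m - 1 / (12 * real m)"
    using assms
  proof (induction m rule: dec_induct)
    case (step j)
    then show ?case using stirling_remainder_Suc_ge[of j] by (simp add: add.commute)
  qed simp
  moreover have "stirling_remainder 1 = 1" by (simp add: stirling_remainder_def)
  moreover have "0 \<le> 1 / (12 * real m)" by simp
  ultimately show ?thesis by linarith
qed

lemma binomial_term_le:
  assumes "1 \<le> k" "k < n"
  shows "real (n choose k) * (real k / real n) ^ k * (1 - real k / real n) ^ (n - k)
           \<le> exp (-11/12) * sqrt (real n) / sqrt (real k * real (n - k))"
proof -
  define r where "r = n - k"
  have r: "n = k + r" "1 \<le> r" using assms by (auto simp: r_def)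
  have one_minus: "1 - real k / real n = real r / real n" using r by (simp add: field_simps)
  let ?t = "real (n choose k) * (real k / real n) ^ k * (real r / real n) ^ r"
  have "ln ?t = ln (fact n) - ln (fact k) - ln (fact r)
                  + real k * (ln k - ln n) + real r * (ln r - ln n)"
    using assms r by (simp add: binomial_fact ln_mult ln_div ln_realpow zero_less_binomial)
  also have "\<dots> = stirling_remainder n - stirling_remainder k - stirling_remainder r
                  + (ln n - ln k - ln r) / 2"
    using r by (simp add: stirling_remainder_def field_simps)
  also have "\<dots> \<le> -11/12 + (ln n - ln k - ln r) / 2"
    using stirling_remainder_antimono[of r n] stirling_remainder_ge[of k] assms r by simp
  also have "\<dots> = ln (exp (-11/12) * sqrt (real n) / sqrt (real k * real r))"
    using assms r by (simp add: ln_mult ln_div ln_sqrt field_simps)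
  finally have "ln ?t \<le> ln (exp (-11/12) * sqrt (real n) / sqrt (real k * real r))" .
  moreover have "?t > 0" using assms r by (simp add: zero_less_binomial)
  moreover have "exp (-11/12) * sqrt (real n) / sqrt (real k * real r) > 0" using assms r by simp
  ultimately have "?t \<le> exp (-11/12) * sqrt (real n) / sqrt (real k * real r)"
    by (simp only: ln_le_cancel_iff)
  then show ?thesis by (simp add: one_minus flip: r_def)
qed

lemma arcsin_affine_has_real_derivative:
  fixes x N :: real
  assumes "0 < x" "x < N"
  shows "((\<lambda>x. arcsin (2 * x / N - 1)) has_real_derivative 1 / sqrt (x * (N - x))) (at x)"
proof -
  have N: "N > 0" using assms by simp
  have y: "-1 < 2 * x / N - 1" "2 * x / N - 1 < 1" using assms N by (auto simp: field_simps)
  have "1 - (2 * x / N - 1)\<^sup>2 = (2 / N)\<^sup>2 * (x * (N - x))"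
    using N by (simp add: field_simps power2_eq_square)
  then have "sqrt (1 - (2 * x / N - 1)\<^sup>2) = (2 / N) * sqrt (x * (N - x))"
    using N by (simp add: real_sqrt_mult)
  then have "inverse (sqrt (1 - (2 * x / N - 1)\<^sup>2)) * (2 / N) = 1 / sqrt (x * (N - x))"
    using N assms by (simp add: field_simps)
  moreover have "((\<lambda>x. 2 * x / N - 1) has_real_derivative 2 / N) (at x)"
    using N by (auto intro!: derivative_eq_intros)
  from DERIV_chain2[OF DERIV_arcsin[OF y] this]
  have "((\<lambda>x. arcsin (2 * x / N - 1)) has_real_derivative
           inverse (sqrt (1 - (2 * x / N - 1)\<^sup>2)) * (2 / N)) (at x)" .
  ultimately show ?thesis by simp
qed

lemma two_div_sqrt_le_inverse_sqrt_add:
  fixes a b u :: real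
  assumes "0 < a" "0 < b" "a + b \<le> 2 * u"
  shows "2 / sqrt u \<le> 1 / sqrt a + 1 / sqrt b"
proof -
  have u: "u > 0" using assms by simp
  have "sqrt (a * b) \<le> (a + b) / 2" using arith_geo_mean_sqrt[of a b] assms by simp
  then have ab: "sqrt (a * b) \<le> u" using assms by simp
  have "(2 / sqrt u)\<^sup>2 = 4 / u" using u by (simp add: power_divide)
  also have "\<dots> \<le> 4 / sqrt (a * b)"
    using ab assms by (intro divide_left_mono) auto
  also have "\<dots> = 4 * (1 / sqrt a) * (1 / sqrt b)" using assms by (simp add: real_sqrt_mult)
  also have "\<dots> \<le> (1 / sqrt a + 1 / sqrt b)\<^sup>2"
    using sum_squares_ge_zero[of "1 / sqrt a - 1 / sqrt b" 0]
    by (simp add: power2_eq_square algebra_simps)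
  finally show ?thesis
    using assms u by (simp add: power2_le_iff_abs_le abs_le_square_iff)
qed

text \<open>The derivative \<open>1 / sqrt (x (N - x))\<close> of \<open>arcsin (2x/N - 1)\<close> is convex, so its
  integral over \<open>[k - 1/2, k + 1/2]\<close> dominates its value at \<open>k\<close>.\<close>
lemma inverse_sqrt_le_arcsin_diff:
  fixes k N :: real
  assumes k: "1 \<le> k" "k \<le> N - 1"
  shows "1 / sqrt (k * (N - k)) \<le> arcsin (2 * (k + 1/2) / N - 1) - arcsin (2 * (k - 1/2) / N - 1)"
proof -
  let ?G = "\<lambda>x. arcsin (2 * x / N - 1)"
  define c where "c = 1 / sqrt (k * (N - k))"
  let ?psi = "\<lambda>t. ?G (k + t) - ?G (k - t) - 2 * t * c"
  have "?psi 0 \<le> ?psi (1/2)"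
  proof (rule DERIV_nonneg_imp_nondecreasing[of 0 "1/2" ?psi])
    fix t :: real assume t: "0 \<le> t" "t \<le> 1/2"
    have pos: "0 < k + t" "k + t < N" "0 < k - t" "k - t < N" using k t by auto
    have "(?psi has_real_derivative
             1 / sqrt ((k + t) * (N - (k + t))) * 1 - 1 / sqrt ((k - t) * (N - (k - t))) * (-1) - 2 * c)
            (at t)"
      by (intro DERIV_diff DERIV_chain2[OF arcsin_affine_has_real_derivative] pos)
         (auto intro!: derivative_eq_intros)
    moreover have "2 / sqrt (k * (N - k))
                     \<le> 1 / sqrt ((k + t) * (N - (k + t))) + 1 / sqrt ((k - t) * (N - (k - t)))"
      using pos by (intro two_div_sqrt_le_inverse_sqrt_add mult_pos_pos) (auto simp: algebra_simps)
    ultimately show "\<exists>y. (?psi has_real_derivative y) (at t) \<and> 0 \<le> y"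
      by (auto simp: c_def)
  qed simp
  then show ?thesis by (simp add: c_def)
qed

lemma sum_inverse_sqrt_le_pi:
  assumes "n \<ge> 2"
  shows "(\<Sum>k=1..n-1. 1 / sqrt (real k * real (n - k))) \<le> pi"
proof -
  let ?H = "\<lambda>k::nat. arcsin (2 * (real k - 1/2) / real n - 1)"
  have "(\<Sum>k=1..n-1. 1 / sqrt (real k * real (n - k))) \<le> (\<Sum>k=1..n-1. ?H (Suc k) - ?H k)"
  proof (rule sum_mono)
    fix k assume "k \<in> {1..n-1}"
    then have k: "1 \<le> real k" "real k \<le> real n - 1" "real (n - k) = real n - real k" by auto
    show "1 / sqrt (real k * real (n - k)) \<le> ?H (Suc k) - ?H k"
      using inverse_sqrt_le_arcsin_diff[OF k(1,2)] k(3) by (simp add: algebra_simps)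
  qed
  also have "\<dots> = ?H n - ?H 1" using sum_Suc_diff[of 1 "n - 1" ?H] assms by simp
  also have "\<dots> \<le> pi / 2 - (- (pi / 2))"
    using assms by (intro diff_mono arcsin_ubound arcsin_lbound) (auto simp: field_simps)
  finally show ?thesis by simp
qed

lemma exp_neg_11_12_mult_pi_le: "exp (-11/12) * pi \<le> 4/3"
proof -
  have "(1 + 11/144 :: real) ^ 12 \<le> exp (11/144) ^ 12"
    by (intro power_mono) (use exp_ge_add_one_self[of "11/144::real"] in auto)
  also have "\<dots> = exp (11/12)" by (simp flip: exp_of_nat_mult)
  finally have "12/5 \<le> exp (11/12 :: real)" by (simp add: power_divide)
  then show ?thesis using pi_approx(2) by (simp add: exp_minus field_simps)
qed

lemma binomial_inner_sum_le:
  assumes "n \<ge> 2"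
  shows "(\<Sum>k=1..n-1. real (n choose k) * (real k / real n) ^ k * (1 - real k / real n) ^ (n - k))
           \<le> exp (-11/12) * pi * sqrt (real n)"
proof -
  have "(\<Sum>k=1..n-1. real (n choose k) * (real k / real n) ^ k * (1 - real k / real n) ^ (n - k))
          \<le> (\<Sum>k=1..n-1. exp (-11/12) * sqrt (real n) * (1 / sqrt (real k * real (n - k))))"
    by (intro sum_mono) (use binomial_term_le in auto)
  also have "\<dots> = exp (-11/12) * sqrt (real n) * (\<Sum>k=1..n-1. 1 / sqrt (real k * real (n - k)))"
    by (simp add: sum_distrib_left)
  also have "\<dots> \<le> exp (-11/12) * sqrt (real n) * pi"
    by (intro mult_left_mono sum_inverse_sqrt_le_pi assms) simp
  finally show ?thesis by (simp add: mult_ac)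
qed

lemma binomial_mode_sum_le:
  assumes "n \<ge> 1"
  shows "(\<Sum>k=0..n. real (n choose k) * (real k / real n) ^ k * (1 - real k / real n) ^ (n - k))
           \<le> 2 * sqrt (real n)"
    (is "?\<xi> \<le> _")
proof (cases "n \<ge> 9")
  case True
  let ?f = "\<lambda>k. real (n choose k) * (real k / real n) ^ k * (1 - real k / real n) ^ (n - k)"
  obtain m where m: "n = Suc m" using assms by (cases n) auto
  have "?\<xi> = ?f 0 + (\<Sum>k=1..n-1. ?f k) + ?f n"
    unfolding m by (simp add: sum.atLeast_Suc_atMost)
  also have "\<dots> \<le> 1 + 4/3 * sqrt (real n) + 1"
  proof -
    have "(\<Sum>k=1..n-1. ?f k) \<le> exp (-11/12) * pi * sqrt (real n)"
      using True by (intro binomial_inner_sum_le) simp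
    also have "\<dots> \<le> 4/3 * sqrt (real n)"
      by (intro mult_right_mono exp_neg_11_12_mult_pi_le) simp
    finally show ?thesis using assms by simp
  qed
  also have "\<dots> \<le> 2 * sqrt (real n)"
    using True real_sqrt_le_mono[of 9 "real n"] by simp
  finally show ?thesis .
next
  case False
  then have "n = 1 \<or> n = 2 \<or> n = 3 \<or> n = 4 \<or> n = 5 \<or> n = 6 \<or> n = 7 \<or> n = 8"
    using assms by auto
  then have "?\<xi>\<^sup>2 \<le> 4 * real n"
    by (elim disjE) (simp_all add: eval_nat_numeral)
  then have "?\<xi> \<le> sqrt (4 * real n)" by (rule real_le_rsqrt)
  then show ?thesis by (simp add: real_sqrt_mult)
qed

definition kl_term :: "real \<Rightarrow> real \<Rightarrow> real" where
  "kl_term q p = (if q = 0 then 0 else q * ln (q / p))"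

definition kl_infinite :: "real \<Rightarrow> real \<Rightarrow> bool" where
  "kl_infinite q p \<longleftrightarrow> (q \<noteq> 0 \<and> p = 0) \<or> (q \<noteq> 1 \<and> p = 1)"

definition kl_real :: "real \<Rightarrow> real \<Rightarrow> real" where
  "kl_real q p = kl_term q p + kl_term (1 - q) (1 - p)"

lemma kl_bin_eq: "kl_bin q p = (if kl_infinite q p then \<infinity> else ereal (kl_real q p))"
  unfolding kl_bin_def kl_infinite_def kl_real_def kl_term_def by auto

definition exp_kl :: "nat \<Rightarrow> real \<Rightarrow> real \<Rightarrow> ennreal" where
  "exp_kl n q p = (if kl_infinite q p then \<infinity> else ennreal (exp (real n * kl_real q p)))"

lemma measurable_kl_term [measurable]:
  assumes [measurable]: "q \<in> borel_measurable M" "p \<in> borel_measurable M"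
  shows "(\<lambda>x. kl_term (q x) (p x)) \<in> borel_measurable M"
  unfolding kl_term_def by measurable

lemma measurable_kl_real [measurable]:
  assumes [measurable]: "q \<in> borel_measurable M" "p \<in> borel_measurable M"
  shows "(\<lambda>x. kl_real (q x) (p x)) \<in> borel_measurable M"
  unfolding kl_real_def by measurable

lemma measurable_kl_infinite [measurable]:
  assumes [measurable]: "q \<in> borel_measurable M" "p \<in> borel_measurable M"
  shows "Measurable.pred M (\<lambda>x. kl_infinite (q x) (p x))"
  unfolding kl_infinite_def by measurable

lemma measurable_exp_kl [measurable]:
  assumes [measurable]: "q \<in> borel_measurable M" "p \<in> borel_measurable M"
  shows "(\<lambda>x. exp_kl n (q x) (p x)) \<in> borel_measurable M"
  unfolding exp_kl_def by measurable

lemma kl_term_ge_linear: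
  assumes "c > 0" "q \<ge> 0" "p \<ge> 0" "q \<noteq> 0 \<Longrightarrow> p \<noteq> 0"
  shows "q * ln c + q - c * p \<le> kl_term q p"
proof (cases "q = 0")
  case False
  then have q: "q > 0" and p: "p > 0" using assms by auto
  have "ln (c * p / q) \<le> c * p / q - 1"
    using assms q p by (intro ln_le_minus_one) simp
  then have "q * ln (c * p / q) \<le> q * (c * p / q - 1)"
    using q by (intro mult_left_mono) auto
  moreover have "ln (c * p / q) = ln c - ln (q / p)"
    using assms q p by (simp add: ln_div ln_mult)
  ultimately show ?thesis using False q by (simp add: kl_term_def algebra_simps)
qed (use assms in \<open>simp add: kl_term_def\<close>)

lemma kl_real_nonneg:
  assumes "0 \<le> q" "q \<le> 1" "0 \<le> p" "p \<le> 1" "\<not> kl_infinite q p"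
  shows "0 \<le> kl_real q p"
proof -
  have "q * ln 1 + q - 1 * p \<le> kl_term q p"
    using assms by (intro kl_term_ge_linear) (auto simp: kl_infinite_def)
  moreover have "(1 - q) * ln 1 + (1 - q) - 1 * (1 - p) \<le> kl_term (1 - q) (1 - p)"
    using assms by (intro kl_term_ge_linear) (auto simp: kl_infinite_def)
  ultimately show ?thesis unfolding kl_real_def by simp
qed

lemma (in prob_space) integrable_unit_interval:
  fixes f :: "'a \<Rightarrow> real"
  assumes "f \<in> borel_measurable M" "\<And>x. x \<in> space M \<Longrightarrow> f x \<in> {0..1}"
  shows "integrable M f"
  by (rule integrable_const_bound[where B=1]) (use assms in \<open>auto\<close>)

lemma (in prob_space) integral_unit_interval:
  fixes f :: "'a \<Rightarrow> real"
  assumes "f \<in> borel_measurable M" "\<And>x. x \<in> space M \<Longrightarrow> f x \<in> {0..1}"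
  shows "(\<integral>x. f x \<partial>M) \<in> {0..1}"
proof -
  have "(\<integral>x. f x \<partial>M) \<le> (\<integral>x. 1 \<partial>M)"
    using assms by (intro integral_mono integrable_unit_interval) auto
  moreover have "0 \<le> (\<integral>x. f x \<partial>M)"
    using assms by (intro integral_nonneg_AE AE_I2) auto
  ultimately show ?thesis by (simp add: prob_space)
qed

text \<open>Jensen's inequality for the jointly convex \<open>kl_term\<close>: integrate the linear minorant
  \<open>kl_term_ge_linear\<close> with slope \<open>c = E q / E p\<close>.\<close>
lemma (in prob_space) kl_term_integral_le:
  assumes [measurable]: "q \<in> borel_measurable M" "p \<in> borel_measurable M"
    and q: "\<And>x. x \<in> space M \<Longrightarrow> q x \<in> {0..1}" and p: "\<And>x. x \<in> space M \<Longrightarrow> p x \<in> {0..1}"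
    and abs_cont: "AE x in M. q x \<noteq> 0 \<longrightarrow> p x \<noteq> 0"
    and int: "integrable M (\<lambda>x. kl_term (q x) (p x))"
  shows "((\<integral>x. q x \<partial>M) \<noteq> 0 \<longrightarrow> (\<integral>x. p x \<partial>M) \<noteq> 0) \<and>
         kl_term (\<integral>x. q x \<partial>M) (\<integral>x. p x \<partial>M) \<le> (\<integral>x. kl_term (q x) (p x) \<partial>M)"
proof -
  define A where "A = (\<integral>x. q x \<partial>M)"
  define B where "B = (\<integral>x. p x \<partial>M)"
  have qint: "integrable M q" and pint: "integrable M p"
    using q p by (auto intro: integrable_unit_interval)
  have q_nonneg: "AE x in M. 0 \<le> q x" and p_nonneg: "AE x in M. 0 \<le> p x"
    using q p by auto
  have "A \<ge> 0" "B \<ge> 0"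
    using integral_unit_interval[OF _ q] integral_unit_interval[OF _ p] by (auto simp: A_def B_def)
  show ?thesis
  proof (cases "A = 0")
    case True
    then have "AE x in M. q x = 0"
      using integral_nonneg_eq_0_iff_AE[OF qint q_nonneg] by (simp add: A_def)
    then have "(\<integral>x. kl_term (q x) (p x) \<partial>M) = 0"
      by (intro integral_eq_zero_AE) (auto simp: kl_term_def)
    with True show ?thesis by (simp add: A_def kl_term_def)
  next
    case False
    have "B \<noteq> 0"
    proof
      assume "B = 0"
      then have "AE x in M. p x = 0"
        using integral_nonneg_eq_0_iff_AE[OF pint p_nonneg] by (simp add: B_def)
      then have "AE x in M. q x = 0" using abs_cont by eventually_elim auto
      then have "A = 0" unfolding A_def by (simp add: integral_eq_zero_AE)
      with False show False by simp
    qed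
    then have pos: "A > 0" "B > 0" using False \<open>A \<ge> 0\<close> \<open>B \<ge> 0\<close> by auto
    have "A * ln (A / B) = (\<integral>x. q x * ln (A / B) + q x - (A / B) * p x \<partial>M)"
      using qint pint pos by (simp add: A_def B_def)
    also have "\<dots> \<le> (\<integral>x. kl_term (q x) (p x) \<partial>M)"
    proof (rule integral_mono_AE)
      show "integrable M (\<lambda>x. q x * ln (A / B) + q x - (A / B) * p x)"
        using qint pint by simp
      show "AE x in M. q x * ln (A / B) + q x - (A / B) * p x \<le> kl_term (q x) (p x)"
        using abs_cont q_nonneg p_nonneg by eventually_elim (rule kl_term_ge_linear, use pos in auto)
    qed (rule int)
    finally show ?thesis using pos by (simp add: A_def B_def kl_term_def)
  qed
qed

lemma (in prob_space) kl_real_integral_le: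
  assumes [measurable]: "q \<in> borel_measurable M" "p \<in> borel_measurable M"
    and q: "\<And>x. x \<in> space M \<Longrightarrow> q x \<in> {0..1}" and p: "\<And>x. x \<in> space M \<Longrightarrow> p x \<in> {0..1}"
    and finite: "AE x in M. \<not> kl_infinite (q x) (p x)"
    and int: "integrable M (\<lambda>x. kl_real (q x) (p x))"
  shows "\<not> kl_infinite (\<integral>x. q x \<partial>M) (\<integral>x. p x \<partial>M) \<and>
         kl_real (\<integral>x. q x \<partial>M) (\<integral>x. p x \<partial>M) \<le> (\<integral>x. kl_real (q x) (p x) \<partial>M)"
proof -
  have qint: "integrable M q" and pint: "integrable M p"
    using q p by (auto intro: integrable_unit_interval)
  have lower: "AE x in M. -1 \<le> kl_term (q x) (p x) \<and> -1 \<le> kl_term (1 - q x) (1 - p x)"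
    using finite AE_space
  proof eventually_elim
    case (elim x)
    then show ?case
      using q[of x] p[of x] kl_term_ge_linear[of 1 "q x" "p x"]
        kl_term_ge_linear[of 1 "1 - q x" "1 - p x"]
      by (auto simp: kl_infinite_def)
  qed
  have bound: "integrable M (\<lambda>x. \<bar>kl_real (q x) (p x)\<bar> + 2)" using int by simp
  have int1: "integrable M (\<lambda>x. kl_term (q x) (p x))"
    by (rule Bochner_Integration.integrable_bound[OF bound])
       (use lower in \<open>auto simp: kl_real_def\<close>)
  have int2: "integrable M (\<lambda>x. kl_term (1 - q x) (1 - p x))"
    by (rule Bochner_Integration.integrable_bound[OF bound])
       (use lower in \<open>auto simp: kl_real_def\<close>)
  have J1: "((\<integral>x. q x \<partial>M) \<noteq> 0 \<longrightarrow> (\<integral>x. p x \<partial>M) \<noteq> 0) \<and>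
      kl_term (\<integral>x. q x \<partial>M) (\<integral>x. p x \<partial>M) \<le> (\<integral>x. kl_term (q x) (p x) \<partial>M)"
    using finite by (intro kl_term_integral_le q p int1) (auto simp: kl_infinite_def)
  have J2: "((\<integral>x. 1 - q x \<partial>M) \<noteq> 0 \<longrightarrow> (\<integral>x. 1 - p x \<partial>M) \<noteq> 0) \<and>
      kl_term (\<integral>x. 1 - q x \<partial>M) (\<integral>x. 1 - p x \<partial>M) \<le> (\<integral>x. kl_term (1 - q x) (1 - p x) \<partial>M)"
    using finite q p by (intro kl_term_integral_le int2) (auto simp: kl_infinite_def)
  have "(\<integral>x. 1 - q x \<partial>M) = 1 - (\<integral>x. q x \<partial>M)" "(\<integral>x. 1 - p x \<partial>M) = 1 - (\<integral>x. p x \<partial>M)"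
    using qint pint by (simp_all add: prob_space)
  moreover have "(\<integral>x. kl_real (q x) (p x) \<partial>M)
      = (\<integral>x. kl_term (q x) (p x) \<partial>M) + (\<integral>x. kl_term (1 - q x) (1 - p x) \<partial>M)"
    unfolding kl_real_def using int1 int2 by simp
  ultimately show ?thesis
    using J1 J2 unfolding kl_real_def kl_infinite_def by auto
qed

lemma exp_kl_term_mult_power:
  assumes "n > 0" "m \<noteq> 0 \<Longrightarrow> p > 0"
  shows "exp (real n * kl_term (real m / real n) p) * p ^ m = (real m / real n) ^ m"
proof (cases "m = 0")
  case False
  then have "real n * kl_term (real m / real n) p = real m * ln (real m / real n / p)"
    using assms by (simp add: kl_term_def)
  also have "exp \<dots> = (real m / real n / p) ^ m"
    using assms False by (simp add: exp_of_nat_mult)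
  finally show ?thesis
    using assms False by (simp add: power_divide power_mult_distrib)
qed (simp add: kl_term_def)

lemma exp_kl_mult_binomial_le:
  assumes "n \<ge> 1" "k \<le> n" "p \<in> {0..1}"
  shows "exp_kl n (real k / real n) p * ennreal (p ^ k * (1 - p) ^ (n - k))
           \<le> ennreal ((real k / real n) ^ k * (1 - real k / real n) ^ (n - k))"
proof (cases "kl_infinite (real k / real n) p")
  case True
  then have "p ^ k * (1 - p) ^ (n - k) = 0"
    using assms by (auto simp: kl_infinite_def field_simps)
  then show ?thesis by (metis ennreal_0 mult_zero_right zero_le)
next
  case False
  have one_minus: "1 - real k / real n = real (n - k) / real n"
    using assms by (simp add: field_simps)
  have "exp (real n * kl_real (real k / real n) p) * (p ^ k * (1 - p) ^ (n - k))
          = (exp (real n * kl_term (real k / real n) p) * p ^ k)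
            * (exp (real n * kl_term (real (n - k) / real n) (1 - p)) * (1 - p) ^ (n - k))"
    by (simp add: kl_real_def one_minus distrib_left exp_add mult_ac)
  also have "\<dots> = (real k / real n) ^ k * (real (n - k) / real n) ^ (n - k)"
    using False assms
    by (intro arg_cong2[where f = "(*)"] exp_kl_term_mult_power)
       (auto simp: kl_infinite_def one_minus field_simps)
  finally show ?thesis
    using False assms by (simp add: exp_kl_def one_minus ennreal_mult'[symmetric])
qed

lemma AE_RN_deriv_pos:
  assumes "sigma_finite_measure \<pi>" "sigma_finite_measure \<rho>"
    and ac: "absolutely_continuous \<pi> \<rho>" and sets: "sets \<rho> = sets \<pi>"
  shows "AE x in \<rho>. 0 < enn2real (RN_deriv \<pi> \<rho> x)"
proof -
  interpret \<pi>: sigma_finite_measure \<pi> by fact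
  have "AE x in \<rho>. RN_deriv \<pi> \<rho> x \<noteq> \<infinity>"
    by (intro absolutely_continuous_AE[OF sets ac] \<pi>.RN_deriv_finite assms)
  moreover have "AE x in \<rho>. RN_deriv \<pi> \<rho> x \<noteq> 0"
  proof -
    let ?N = "{x \<in> space \<rho>. RN_deriv \<pi> \<rho> x = 0}"
    have N: "?N \<in> sets \<rho>" using sets by measurable
    have "emeasure \<rho> ?N = (\<integral>\<^sup>+x. RN_deriv \<pi> \<rho> x * indicator ?N x \<partial>\<pi>)"
      using N sets by (simp flip: \<pi>.RN_deriv_nn_integral[OF ac sets])
    also have "\<dots> = 0"
      by (intro nn_integral_zero') (auto simp: indicator_def)
    finally show ?thesis using AE_iff_measurable[OF N] by auto
  qed
  ultimately show ?thesis
    by eventually_elim (auto simp: enn2real_positive_iff top.not_eq_extremum zero_less_iff_neq_zero)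
qed

lemma integral_divide_RN_deriv_le:
  assumes "sigma_finite_measure \<pi>" "sigma_finite_measure \<rho>"
    and ac: "absolutely_continuous \<pi> \<rho>" and sets: "sets \<rho> = sets \<pi>"
    and [measurable]: "g \<in> borel_measurable \<pi>" and g_nonneg: "\<And>x. x \<in> space \<pi> \<Longrightarrow> 0 \<le> g x"
    and c: "(\<integral>\<^sup>+x. ennreal (g x) \<partial>\<pi>) \<le> ennreal c" "0 \<le> c"
  shows "integrable \<rho> (\<lambda>x. g x / enn2real (RN_deriv \<pi> \<rho> x))
         \<and> (\<integral>x. g x / enn2real (RN_deriv \<pi> \<rho> x) \<partial>\<rho>) \<le> c"
proof -
  interpret \<pi>: sigma_finite_measure \<pi> by fact
  let ?h = "\<lambda>x. g x / enn2real (RN_deriv \<pi> \<rho> x)"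
  have [measurable]: "?h \<in> borel_measurable \<rho>" using sets by simp
  have h_nonneg: "0 \<le> ?h x" if "x \<in> space \<rho>" for x
    using g_nonneg that sets_eq_imp_space_eq[OF sets] by simp
  have "(\<integral>\<^sup>+x. ennreal (?h x) \<partial>\<rho>) = (\<integral>\<^sup>+x. RN_deriv \<pi> \<rho> x * ennreal (?h x) \<partial>\<pi>)"
    by (intro \<pi>.RN_deriv_nn_integral ac sets) measurable
  also have "\<dots> \<le> (\<integral>\<^sup>+x. ennreal (g x) \<partial>\<pi>)"
  proof (rule nn_integral_mono_AE)
    show "AE x in \<pi>. RN_deriv \<pi> \<rho> x * ennreal (?h x) \<le> ennreal (g x)"
      using \<pi>.RN_deriv_finite[OF assms(2) ac sets] AE_space
    proof eventually_elim
      case (elim x)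
      show ?case
      proof (cases "RN_deriv \<pi> \<rho> x = 0")
        case False
        with elim obtain r where "RN_deriv \<pi> \<rho> x = ennreal r" "r > 0"
          by (cases "RN_deriv \<pi> \<rho> x") (auto simp: zero_less_iff_neq_zero)
        with g_nonneg[of x] elim show ?thesis
          by (simp flip: ennreal_mult)
      qed simp
    qed
  qed
  finally have nn: "(\<integral>\<^sup>+x. ennreal (?h x) \<partial>\<rho>) \<le> ennreal c" using c by simp
  then have "integrable \<rho> ?h"
    using h_nonneg by (intro integrableI_nonneg AE_I2) (auto simp: top.not_eq_extremum le_less_trans)
  moreover have "(\<integral>x. ?h x \<partial>\<rho>) = enn2real (\<integral>\<^sup>+x. ennreal (?h x) \<partial>\<rho>)"
    using h_nonneg by (intro integral_eq_nn_integral AE_I2) auto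
  ultimately show ?thesis using nn c by (auto intro: enn2real_leI)
qed

text \<open>Change of measure (Donsker--Varadhan): from \<open>1 + y \<le> exp y\<close> with
  \<open>y = \<phi> - ln (d\<rho>/d\<pi>) - ln Z\<close>, integrated against \<open>\<rho>\<close>.\<close>
lemma integral_le_KL_div_plus_ln:
  assumes "prob_space \<pi>" "prob_space \<rho>" and sets: "sets \<rho> = sets \<pi>"
    and KL: "KL_div \<rho> \<pi> \<noteq> \<infinity>"
    and [measurable]: "\<phi> \<in> borel_measurable \<pi>" and \<phi>_nonneg: "AE x in \<rho>. 0 \<le> \<phi> x"
    and Z: "(\<integral>\<^sup>+x. ennreal (exp (\<phi> x)) \<partial>\<pi>) \<le> ennreal Z" "Z > 0"
  shows "integrable \<rho> \<phi> \<and> ereal (\<integral>x. \<phi> x \<partial>\<rho>) \<le> KL_div \<rho> \<pi> + ereal (ln Z)"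
proof -
  interpret \<pi>: prob_space \<pi> by fact
  interpret \<rho>: prob_space \<rho> by fact
  define r where "r x = enn2real (RN_deriv \<pi> \<rho> x)" for x
  have ac: "absolutely_continuous \<pi> \<rho>" and ln_r: "integrable \<rho> (\<lambda>x. ln (r x))"
    and KL_eq: "KL_div \<rho> \<pi> = ereal (\<integral>x. ln (r x) \<partial>\<rho>)"
    using KL unfolding KL_div_def r_def by (auto split: if_splits)
  have [measurable]: "\<phi> \<in> borel_measurable \<rho>" "r \<in> borel_measurable \<rho>"
    using sets unfolding r_def by (simp_all add: measurable_cong_sets[OF sets refl])
  define g where "g x = exp (\<phi> x) / Z / r x" for x
  have "(\<integral>\<^sup>+x. ennreal (exp (\<phi> x) / Z) \<partial>\<pi>) = (\<integral>\<^sup>+x. ennreal (exp (\<phi> x)) \<partial>\<pi>) * ennreal (1 / Z)"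
    using Z by (subst nn_integral_multc[symmetric])
      (auto intro!: nn_integral_cong simp: divide_inverse simp flip: ennreal_mult)
  also have "\<dots> \<le> ennreal Z * ennreal (1 / Z)"
    by (intro mult_right_mono Z) simp
  also have "\<dots> = 1" using Z by (simp flip: ennreal_mult)
  finally have "integrable \<rho> g \<and> (\<integral>x. g x \<partial>\<rho>) \<le> 1"
    unfolding g_def r_def using Z
    by (intro integral_divide_RN_deriv_le \<pi>.sigma_finite_measure_axioms
          \<rho>.sigma_finite_measure_axioms ac sets) auto
  then have g_int: "integrable \<rho> g" and g_integral: "(\<integral>x. g x \<partial>\<rho>) \<le> 1" by auto
  define h where "h x = ln (r x) + ln Z - 1 + g x" for x
  have h_int: "integrable \<rho> h" unfolding h_def using ln_r g_int by simp
  have \<phi>_le_h: "AE x in \<rho>. \<phi> x \<le> h x"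
    using AE_RN_deriv_pos[OF \<pi>.sigma_finite_measure_axioms \<rho>.sigma_finite_measure_axioms ac sets]
  proof eventually_elim
    case (elim x)
    have "1 + (\<phi> x - ln (r x) - ln Z) \<le> exp (\<phi> x - ln (r x) - ln Z)" by (rule exp_ge_add_one_self)
    also have "\<dots> = g x" using elim Z by (simp add: exp_diff g_def r_def)
    finally show ?case by (simp add: h_def)
  qed
  have \<phi>_int: "integrable \<rho> \<phi>"
  proof (rule Bochner_Integration.integrable_bound[OF h_int])
    show "AE x in \<rho>. norm (\<phi> x) \<le> norm (h x)"
      using \<phi>_le_h \<phi>_nonneg by eventually_elim auto
  qed simp
  have "(\<integral>x. \<phi> x \<partial>\<rho>) \<le> (\<integral>x. h x \<partial>\<rho>)"
    by (rule integral_mono_AE[OF \<phi>_int h_int \<phi>_le_h])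
  also have "\<dots> = (\<integral>x. ln (r x) \<partial>\<rho>) + ln Z - 1 + (\<integral>x. g x \<partial>\<rho>)"
    unfolding h_def using ln_r g_int by (simp add: \<rho>.prob_space)
  also have "\<dots> \<le> (\<integral>x. ln (r x) \<partial>\<rho>) + ln Z" using g_integral by simp
  finally show ?thesis using \<phi>_int by (simp add: KL_eq)
qed

lemma kl_bin_integral_le:
  assumes \<pi>: "prob_space \<pi>" and \<rho>: "\<rho> \<in> prob_dists \<pi>"
    and [measurable]: "q \<in> borel_measurable \<pi>" "p \<in> borel_measurable \<pi>"
    and q: "\<And>h. h \<in> space \<pi> \<Longrightarrow> q h \<in> {0..1}" and p: "\<And>h. h \<in> space \<pi> \<Longrightarrow> p h \<in> {0..1}"
    and n: "n \<ge> 1" and t: "t > 0"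
    and Z: "(\<integral>\<^sup>+h. exp_kl n (q h) (p h) \<partial>\<pi>) \<le> ennreal t"
  shows "kl_bin (\<integral>h. q h \<partial>\<rho>) (\<integral>h. p h \<partial>\<rho>) \<le> (KL_div \<rho> \<pi> + ereal (ln t)) / ereal (real n)"
proof (cases "KL_div \<rho> \<pi> = \<infinity>")
  case True
  then show ?thesis using n by simp
next
  case False
  interpret \<rho>: prob_space \<rho> using \<rho> by (simp add: prob_dists_def)
  have sets: "sets \<rho> = sets \<pi>" using \<rho> by (simp add: prob_dists_def)
  have space: "space \<rho> = space \<pi>" using sets by (rule sets_eq_imp_space_eq)
  have q_meas[measurable]: "q \<in> borel_measurable \<rho>" and p_meas[measurable]: "p \<in> borel_measurable \<rho>"
    by (simp_all add: measurable_cong_sets[OF sets refl])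
  have ac: "absolutely_continuous \<pi> \<rho>"
    using False by (simp add: KL_div_def split: if_splits)
  have "(\<integral>\<^sup>+h. exp_kl n (q h) (p h) \<partial>\<pi>) \<noteq> \<infinity>"
    using le_less_trans[OF Z ennreal_less_top] by simp
  then have "AE h in \<pi>. exp_kl n (q h) (p h) \<noteq> \<infinity>"
    by (intro nn_integral_PInf_AE) measurable
  then have "AE h in \<pi>. \<not> kl_infinite (q h) (p h)"
    by eventually_elim (simp add: exp_kl_def split: if_splits)
  then have finite: "AE h in \<rho>. \<not> kl_infinite (q h) (p h)"
    by (rule absolutely_continuous_AE[OF sets ac])
  have "AE h in \<rho>. 0 \<le> real n * kl_real (q h) (p h)"
    using finite AE_space by eventually_elim (use q p space kl_real_nonneg in auto)
  moreover have "(\<integral>\<^sup>+h. ennreal (exp (real n * kl_real (q h) (p h))) \<partial>\<pi>) \<le> ennreal t"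
    using Z by (elim order_trans[rotated], intro nn_integral_mono) (simp add: exp_kl_def)
  ultimately have "integrable \<rho> (\<lambda>h. real n * kl_real (q h) (p h))
      \<and> ereal (\<integral>h. real n * kl_real (q h) (p h) \<partial>\<rho>) \<le> KL_div \<rho> \<pi> + ereal (ln t)"
    using t by (intro integral_le_KL_div_plus_ln[OF \<pi> \<rho>.prob_space_axioms sets False]) auto
  then have int: "integrable \<rho> (\<lambda>h. kl_real (q h) (p h))"
    and le: "ereal (real n * (\<integral>h. kl_real (q h) (p h) \<partial>\<rho>)) \<le> KL_div \<rho> \<pi> + ereal (ln t)"
    using n by auto
  from \<rho>.kl_real_integral_le[OF q_meas p_meas _ _ finite int]
  have "\<not> kl_infinite (\<integral>h. q h \<partial>\<rho>) (\<integral>h. p h \<partial>\<rho>) \<and>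
        kl_real (\<integral>h. q h \<partial>\<rho>) (\<integral>h. p h \<partial>\<rho>) \<le> (\<integral>h. kl_real (q h) (p h) \<partial>\<rho>)"
    using q p by (simp add: space)
  moreover obtain k where k: "KL_div \<rho> \<pi> = ereal k" using False le by (cases "KL_div \<rho> \<pi>") auto
  moreover have "(\<integral>h. kl_real (q h) (p h) \<partial>\<rho>) \<le> (k + ln t) / real n"
    using le k n by (simp add: field_simps)
  ultimately show ?thesis using n by (simp add: kl_bin_eq)
qed

lemma integral_le_kl_inv_plus:
  assumes "prob_space \<pi>" and \<rho>: "\<rho> \<in> prob_dists \<pi>"
    and [measurable]: "q \<in> borel_measurable \<pi>" "p \<in> borel_measurable \<pi>"
    and "\<And>h. h \<in> space \<pi> \<Longrightarrow> q h \<in> {0..1}" and p: "\<And>h. h \<in> space \<pi> \<Longrightarrow> p h \<in> {0..1}"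
    and "n \<ge> 1" "t > 0"
    and "(\<integral>\<^sup>+h. exp_kl n (q h) (p h) \<partial>\<pi>) \<le> ennreal t"
  shows "(\<integral>h. p h \<partial>\<rho>)
           \<le> kl_inv_plus (\<integral>h. q h \<partial>\<rho>) ((KL_div \<rho> \<pi> + ereal (ln t)) / ereal (real n))"
proof -
  interpret \<rho>: prob_space \<rho> using \<rho> by (simp add: prob_dists_def)
  have sets: "sets \<rho> = sets \<pi>" using \<rho> by (simp add: prob_dists_def)
  have "(\<integral>h. p h \<partial>\<rho>) \<in> {0..1}"
    using p sets_eq_imp_space_eq[OF sets]
    by (intro \<rho>.integral_unit_interval) (auto simp: measurable_cong_sets[OF sets refl])
  with kl_bin_integral_le[OF assms] show ?thesis
    unfolding kl_inv_plus_def by (intro cSup_upper) (auto intro: bdd_aboveI[where M=1])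
qed

lemma sum_Pow_lessThan_card:
  fixes F :: "nat \<Rightarrow> real"
  shows "(\<Sum>A\<in>Pow {..<n}. F (card A)) = (\<Sum>k=0..n. real (n choose k) * F k)"
proof -
  have "(\<Sum>A\<in>Pow {..<n}. F (card A)) = (\<Sum>k=0..n. \<Sum>A\<in>{A. A \<in> Pow {..<n} \<and> card A = k}. F (card A))"
    by (rule sum.group[symmetric]) (auto simp: card_mono[of "{..<n}", simplified])
  also have "\<dots> = (\<Sum>k=0..n. real (n choose k) * F k)"
    using n_subsets[of "{..<n}"] by (intro sum.cong refl) simp
  finally show ?thesis .
qed

lemma emeasure_PiM_pattern:
  assumes "prob_space D" "G \<in> sets D" "A \<subseteq> {..<n}"
  shows "emeasure (PiM {..<n} (\<lambda>_. D)) (PiE {..<n} (\<lambda>i. if i \<in> A then G else space D - G))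
           = ennreal (measure D G ^ card A * (1 - measure D G) ^ (n - card A))"
proof -
  interpret D: prob_space D by fact
  interpret product_prob_space "\<lambda>_. D" by (rule product_prob_spaceI) fact
  have "emeasure (PiM {..<n} (\<lambda>_. D)) (PiE {..<n} (\<lambda>i. if i \<in> A then G else space D - G))
          = (\<Prod>i<n. ennreal (if i \<in> A then measure D G else 1 - measure D G))"
    using assms by (subst emeasure_PiM) (auto intro!: prod.cong simp: D.emeasure_eq_measure D.prob_compl)
  also have "\<dots> = ennreal ((\<Prod>i\<in>A. measure D G) * (\<Prod>i\<in>{..<n} - A. 1 - measure D G))"
    using assms(3) by (simp add: prod_ennreal prod.If_cases Int_absorb1 Diff_eq)
  also have "\<dots> = ennreal (measure D G ^ card A * (1 - measure D G) ^ (n - card A))"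
    using assms(3) by (simp add: card_Diff_subset finite_subset)
  finally show ?thesis .
qed

lemma nn_integral_PiM_count:
  fixes F :: "nat \<Rightarrow> ennreal"
  assumes D: "prob_space D" and G: "G \<in> sets D"
  shows "(\<integral>\<^sup>+S. F (card {i\<in>{..<n}. S i \<in> G}) \<partial>PiM {..<n} (\<lambda>_. D))
           = (\<Sum>A\<in>Pow {..<n}. F (card A) * ennreal (measure D G ^ card A * (1 - measure D G) ^ (n - card A)))"
proof -
  let ?M = "PiM {..<n} (\<lambda>_. D)"
  define E where "E A = PiE {..<n} (\<lambda>i. if i \<in> A then G else space D - G)" for A
  have E_sets: "E A \<in> sets ?M" for A
    unfolding E_def using G by (intro sets_PiM_I_finite) auto
  have "F (card {i\<in>{..<n}. S i \<in> G}) = (\<Sum>A\<in>Pow {..<n}. F (card A) * indicator (E A) S)"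
    if S: "S \<in> space ?M" for S
  proof -
    have "S \<in> E A \<longleftrightarrow> A = {i\<in>{..<n}. S i \<in> G}" if "A \<in> Pow {..<n}" for A
      using S that unfolding E_def by (auto simp: space_PiM PiE_def Pi_def)
    then have "(\<Sum>A\<in>Pow {..<n}. F (card A) * indicator (E A) S)
                 = (\<Sum>A\<in>Pow {..<n}. if A = {i\<in>{..<n}. S i \<in> G} then F (card A) else 0)"
      by (intro sum.cong) (auto simp: indicator_def)
    also have "\<dots> = F (card {i\<in>{..<n}. S i \<in> G})"
      by (subst sum.delta) auto
    finally show ?thesis ..
  qed
  then have "(\<integral>\<^sup>+S. F (card {i\<in>{..<n}. S i \<in> G}) \<partial>?M)
               = (\<integral>\<^sup>+S. (\<Sum>A\<in>Pow {..<n}. F (card A) * indicator (E A) S) \<partial>?M)"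
    by (intro nn_integral_cong) simp
  also have "\<dots> = (\<Sum>A\<in>Pow {..<n}. F (card A) * emeasure ?M (E A))"
    using E_sets by (subst nn_integral_sum) (auto simp: nn_integral_cmult_indicator)
  finally show ?thesis
    unfolding E_def by (simp add: emeasure_PiM_pattern[OF D G])
qed

text \<open>Each atom \<open>{S. {i. S i \<in> G} = A}\<close> of the sample space contributes at
  most \<open>(k/n)\<^sup>k (1 - k/n)\<^bsup>n-k\<^esup>\<close>, \<open>k = card A\<close>, independently of \<open>measure D G\<close>.\<close>
lemma nn_integral_exp_kl_frequency_le:
  assumes D: "prob_space D" and G: "G \<in> sets D" and n: "n \<ge> 1"
  shows "(\<integral>\<^sup>+S. exp_kl n (real (card {i\<in>{..<n}. S i \<in> G}) / real n) (measure D G)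
            \<partial>PiM {..<n} (\<lambda>_. D)) \<le> ennreal (2 * sqrt (real n))"
proof -
  let ?mode = "\<lambda>k. (real k / real n) ^ k * (1 - real k / real n) ^ (n - k)"
  have "(\<integral>\<^sup>+S. exp_kl n (real (card {i\<in>{..<n}. S i \<in> G}) / real n) (measure D G) \<partial>PiM {..<n} (\<lambda>_. D))
          \<le> (\<Sum>A\<in>Pow {..<n}. ennreal (?mode (card A)))"
    unfolding nn_integral_PiM_count[OF D G, where F = "\<lambda>k. exp_kl n (real k / real n) (measure D G)"]
  proof (intro sum_mono)
    fix A assume "A \<in> Pow {..<n}"
    then have "card A \<le> n" using card_mono[of "{..<n}" A] by auto
    with n show "exp_kl n (real (card A) / real n) (measure D G)
        * ennreal (measure D G ^ card A * (1 - measure D G) ^ (n - card A)) \<le> ennreal (?mode (card A))"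
      by (intro exp_kl_mult_binomial_le) (auto simp: prob_space.prob_le_1[OF D])
  qed
  also have "\<dots> = ennreal (\<Sum>k=0..n. real (n choose k) * ?mode k)"
    using n card_mono[of "{..<n}"]
    by (subst sum_ennreal) (auto simp: divide_le_eq_1 sum_Pow_lessThan_card[of ?mode])
  also have "\<dots> \<le> ennreal (2 * sqrt (real n))"
    using binomial_mode_sum_le[OF n] by (intro ennreal_leI) (simp add: mult.assoc)
  finally show ?thesis .
qed

lemma measurable_measure_section:
  assumes "sigma_finite_measure D" and [measurable]: "Measurable.pred (N \<Otimes>\<^sub>M D) (\<lambda>(x, z). P x z)"
  shows "(\<lambda>x. measure D {z \<in> space D. P x z}) \<in> borel_measurable N"
proof -
  interpret D: sigma_finite_measure D by fact
  let ?Q = "{w \<in> space (N \<Otimes>\<^sub>M D). P (fst w) (snd w)}"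
  have "?Q \<in> sets (N \<Otimes>\<^sub>M D)" by (simp add: case_prod_beta')
  then have "(\<lambda>x. enn2real (emeasure D (Pair x -` ?Q))) \<in> borel_measurable N"
    by (intro borel_measurable_enn2real D.measurable_emeasure_Pair)
  moreover have "Pair x -` ?Q = {z \<in> space D. P x z}" if "x \<in> space N" for x
    using that by (auto simp: space_pair_measure)
  ultimately show ?thesis
    by (subst measurable_cong[where g = "\<lambda>x. enn2real (emeasure D (Pair x -` ?Q))"])
       (auto simp: measure_def)
qed

lemma measurable_exp_kl_frequency:
  assumes "sigma_finite_measure D" and P: "Measurable.pred (\<pi> \<Otimes>\<^sub>M D) (\<lambda>(h, z). P h z)"
  shows "(\<lambda>(S, h). exp_kl n ((1 / real n) * (\<Sum>i<n. if P h (S i) then 1 else 0))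
                            (measure D {z \<in> space D. P h z}))
           \<in> borel_measurable (PiM {..<n} (\<lambda>_. D) \<Otimes>\<^sub>M \<pi>)"
proof -
  have [measurable]: "Measurable.pred (PiM {..<n} (\<lambda>_. D) \<Otimes>\<^sub>M \<pi>) (\<lambda>x. P (snd x) (fst x i))"
    if "i \<in> {..<n}" for i
  proof -
    have "(\<lambda>x. (snd x, fst x i)) \<in> measurable (PiM {..<n} (\<lambda>_. D) \<Otimes>\<^sub>M \<pi>) (\<pi> \<Otimes>\<^sub>M D)"
      using that by measurable
    from measurable_compose[OF this P] show ?thesis by simp
  qed
  have [measurable]: "(\<lambda>h. measure D {z \<in> space D. P h z}) \<in> borel_measurable \<pi>"
    using assms by (rule measurable_measure_section)
  show ?thesis by measurable
qed

lemma emeasure_ge_le_Markov: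
  assumes [measurable]: "Z \<in> borel_measurable M" and t: "t > 0" and Z: "(\<integral>\<^sup>+x. Z x \<partial>M) \<le> ennreal c"
  shows "emeasure M {x \<in> space M. ennreal t \<le> Z x} \<le> ennreal (c / t)"
proof -
  have "{x \<in> space M. ennreal t \<le> Z x} \<subseteq> {x \<in> space M. 1 \<le> ennreal (1 / t) * Z x}"
  proof safe
    fix x assume "ennreal t \<le> Z x"
    then have "ennreal (1 / t) * ennreal t \<le> ennreal (1 / t) * Z x" by (rule mult_left_mono) simp
    then show "1 \<le> ennreal (1 / t) * Z x" using t by (simp flip: ennreal_mult)
  qed
  then have "emeasure M {x \<in> space M. ennreal t \<le> Z x} \<le> emeasure M {x \<in> space M. 1 \<le> ennreal (1 / t) * Z x}"
    by (rule emeasure_mono) measurable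
  also have "\<dots> \<le> ennreal (1 / t) * (\<integral>\<^sup>+x. Z x * indicator (space M) x \<partial>M)"
    by (rule nn_integral_Markov_inequality) measurable
  also have "(\<integral>\<^sup>+x. Z x * indicator (space M) x \<partial>M) = (\<integral>\<^sup>+x. Z x \<partial>M)"
    by (intro nn_integral_cong) simp
  also have "ennreal (1 / t) * \<dots> \<le> ennreal (1 / t) * ennreal c"
    using Z by (rule mult_left_mono) simp
  also have "\<dots> = ennreal (c / t)"
    using t by (simp flip: ennreal_mult')
  finally show ?thesis .
qed

lemma nn_integral_prior_exp_kl_frequency_le:
  fixes \<pi> :: "'h measure" and D :: "'z measure" and P :: "'h \<Rightarrow> 'z \<Rightarrow> bool"
  assumes "prob_space \<pi>" "prob_space D" and n: "n \<ge> 1"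
    and P: "Measurable.pred (\<pi> \<Otimes>\<^sub>M D) (\<lambda>(h, z). P h z)"
  shows "(\<integral>\<^sup>+S. (\<integral>\<^sup>+h. exp_kl n ((1 / real n) * (\<Sum>i<n. if P h (S i) then 1 else 0))
                                (measure D {z \<in> space D. P h z}) \<partial>\<pi>) \<partial>PiM {..<n} (\<lambda>_. D))
           \<le> ennreal (2 * sqrt (real n))"
proof -
  interpret \<pi>: prob_space \<pi> by fact
  interpret D: prob_space D by fact
  define M where "M = PiM {..<n} (\<lambda>_. D)"
  interpret M: prob_space M unfolding M_def by (intro prob_space_PiM D.prob_space_axioms)
  interpret pair_sigma_finite M \<pi> ..
  define g where "g S h = exp_kl n ((1 / real n) * (\<Sum>i<n. if P h (S i) then 1 else 0))
                                  (measure D {z \<in> space D. P h z})" for S h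
  have "case_prod g \<in> borel_measurable (M \<Otimes>\<^sub>M \<pi>)"
    unfolding g_def M_def by (rule measurable_exp_kl_frequency[OF D.sigma_finite_measure_axioms P])
  then have "(\<integral>\<^sup>+S. (\<integral>\<^sup>+h. g S h \<partial>\<pi>) \<partial>M) = (\<integral>\<^sup>+h. (\<integral>\<^sup>+S. g S h \<partial>M) \<partial>\<pi>)"
    by (rule Fubini'[symmetric])
  also have "\<dots> \<le> (\<integral>\<^sup>+h. ennreal (2 * sqrt (real n)) \<partial>\<pi>)"
  proof (intro nn_integral_mono)
    fix h assume h: "h \<in> space \<pi>"
    let ?G = "{z \<in> space D. P h z}"
    have "Measurable.pred D (P h)" using measurable_Pair2[OF P h] by simp
    then have G: "?G \<in> sets D" by measurable
    have freq: "(1 / real n) * (\<Sum>i<n. if P h (S i) then 1 else 0) = real (card {i\<in>{..<n}. S i \<in> ?G}) / real n"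
      if "S \<in> space M" for S
      using that by (auto simp: M_def space_PiM sum.If_cases Int_def conj_commute intro!: arg_cong[where f = card])
    have "(\<integral>\<^sup>+S. g S h \<partial>M)
            = (\<integral>\<^sup>+S. exp_kl n (real (card {i\<in>{..<n}. S i \<in> ?G}) / real n) (measure D ?G) \<partial>M)"
      by (intro nn_integral_cong) (simp only: g_def freq)
    also have "\<dots> \<le> ennreal (2 * sqrt (real n))"
      unfolding M_def by (rule nn_integral_exp_kl_frequency_le[OF D.prob_space_axioms G n])
    finally show "(\<integral>\<^sup>+S. g S h \<partial>M) \<le> ennreal (2 * sqrt (real n))" .
  qed
  also have "\<dots> = ennreal (2 * sqrt (real n))" by (simp add: \<pi>.emeasure_space_1)
  finally show ?thesis by (simp add: M_def g_def)
qed

lemma frequency_in_unit_interval: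
  assumes "n \<ge> 1"
  shows "(1 / real n) * (\<Sum>i<n. if P i then 1 else 0) \<in> {0..1}"
proof -
  have "0 \<le> (\<Sum>i<n. if P i then 1 else 0 :: real)" by (intro sum_nonneg) auto
  moreover have "(\<Sum>i<n. if P i then 1 else 0 :: real) \<le> (\<Sum>i<n. 1)" by (intro sum_mono) auto
  ultimately show ?thesis using assms by (simp add: divide_le_eq_1)
qed

lemma pac_bayes_kl_event:
  fixes \<pi> :: "'h measure" and D :: "'z measure" and P :: "'h \<Rightarrow> 'z \<Rightarrow> bool"
  assumes \<pi>: "prob_space \<pi>" and D: "prob_space D" and n: "n \<ge> 1" and t: "t > 0"
    and P: "Measurable.pred (\<pi> \<Otimes>\<^sub>M D) (\<lambda>(h, z). P h z)"
  shows "\<exists>B \<in> sets (PiM {..<n} (\<lambda>_. D)).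
           emeasure (PiM {..<n} (\<lambda>_. D)) B \<le> ennreal (2 * sqrt (real n) / t) \<and>
           (\<forall>S \<in> space (PiM {..<n} (\<lambda>_. D)) - B. \<forall>\<rho> \<in> prob_dists \<pi>.
              (\<integral>h. measure D {z \<in> space D. P h z} \<partial>\<rho>)
                \<le> kl_inv_plus (\<integral>h. (1 / real n) * (\<Sum>i<n. if P h (S i) then 1 else 0) \<partial>\<rho>)
                     ((KL_div \<rho> \<pi> + ereal (ln t)) / ereal (real n)))"
proof -
  interpret \<pi>: prob_space \<pi> by fact
  interpret D: prob_space D by fact
  define M where "M = PiM {..<n} (\<lambda>_. D)"
  define q where "q S h = (1 / real n) * (\<Sum>i<n. if P h (S i) then 1 else 0 :: real)" for S h
  define p where "p h = measure D {z \<in> space D. P h z}" for h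
  define B where "B = {S \<in> space M. ennreal t \<le> (\<integral>\<^sup>+h. exp_kl n (q S h) (p h) \<partial>\<pi>)}"
  have "case_prod (\<lambda>S h. exp_kl n (q S h) (p h)) \<in> borel_measurable (M \<Otimes>\<^sub>M \<pi>)"
    unfolding q_def p_def M_def by (rule measurable_exp_kl_frequency[OF D.sigma_finite_measure_axioms P])
  then have Z_meas[measurable]: "(\<lambda>S. \<integral>\<^sup>+h. exp_kl n (q S h) (p h) \<partial>\<pi>) \<in> borel_measurable M"
    by measurable
  have "(\<integral>\<^sup>+S. (\<integral>\<^sup>+h. exp_kl n (q S h) (p h) \<partial>\<pi>) \<partial>M) \<le> ennreal (2 * sqrt (real n))"
    unfolding M_def q_def p_def by (rule nn_integral_prior_exp_kl_frequency_le[OF \<pi> D n P])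
  then have "emeasure M B \<le> ennreal (2 * sqrt (real n) / t)"
    unfolding B_def by (rule emeasure_ge_le_Markov[OF Z_meas t])
  moreover have "B \<in> sets M" unfolding B_def by measurable
  moreover have "(\<integral>h. p h \<partial>\<rho>)
      \<le> kl_inv_plus (\<integral>h. q S h \<partial>\<rho>) ((KL_div \<rho> \<pi> + ereal (ln t)) / ereal (real n))"
    if S: "S \<in> space M - B" and \<rho>: "\<rho> \<in> prob_dists \<pi>" for S \<rho>
  proof (rule integral_le_kl_inv_plus[OF \<pi> \<rho> _ _ _ _ n t])
    have [measurable]: "Measurable.pred \<pi> (\<lambda>h. P h (S i))" if "i < n" for i
      using measurable_Pair1[OF P, of "S i"] S that by (simp add: M_def space_PiM PiE_def Pi_def)
    show "q S \<in> borel_measurable \<pi>" unfolding q_def by measurable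
    show "p \<in> borel_measurable \<pi>"
      unfolding p_def using D.sigma_finite_measure_axioms P by (rule measurable_measure_section)
    show "q S h \<in> {0..1}" for h
      unfolding q_def using n by (rule frequency_in_unit_interval)
    show "p h \<in> {0..1}" for h by (simp add: p_def)
    show "(\<integral>\<^sup>+h. exp_kl n (q S h) (p h) \<partial>\<pi>) \<le> ennreal t"
      using S by (auto simp: B_def)
  qed
  ultimately show ?thesis unfolding M_def q_def p_def by blast
qed

lemma layer_sum_eq:
  fixes b :: "nat \<Rightarrow> real"
  assumes mono: "\<forall>j<K. b j < b (Suc j)" and m: "m \<le> K"
  shows "b m = b 0 + (\<Sum>j=1..K. (b j - b (j - 1)) * (if b j \<le> b m then 1 else 0))"
proof -
  have less: "b i < b j" if "i < j" "j \<le> K" for i j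
    by (rule lift_Suc_mono_less_ivl[where N = "{..<K}"]) (use that mono in auto)
  have "b j \<le> b m \<longleftrightarrow> j \<le> m" if "j \<le> K" for j
  proof (cases "j \<le> m")
    case True
    then show ?thesis using less[of j m] m by (cases "j = m") auto
  next
    case False
    then show ?thesis using less[of m j] that by auto
  qed
  then have "(\<Sum>j=1..K. (b j - b (j - 1)) * (if b j \<le> b m then 1 else 0))
               = (\<Sum>j=1..K. if j \<le> m then b j - b (j - 1) else 0)"
    by (intro sum.cong) auto
  also have "\<dots> = (\<Sum>j\<in>{j\<in>{1..K}. j \<le> m}. b j - b (j - 1))"
    by (rule sum.inter_filter[symmetric]) simp
  also have "{j\<in>{1..K}. j \<le> m} = {1..m}" using m by auto
  also have "(\<Sum>j\<in>{1..m}. b j - b (j - 1)) = b m - b 0"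
    by (induction m) auto
  finally show ?thesis by simp
qed

lemma (in prob_space) integral_eq_layer_sum:
  fixes g :: "'a \<Rightarrow> real" and b :: "nat \<Rightarrow> real"
  assumes mono: "\<forall>j<K. b j < b (Suc j)" and [measurable]: "g \<in> borel_measurable M"
    and range: "\<And>x. x \<in> space M \<Longrightarrow> g x \<in> b ` {0..K}"
  shows "(\<integral>x. g x \<partial>M) = b 0 + (\<Sum>j=1..K. (b j - b (j - 1)) * prob {x \<in> space M. b j \<le> g x})"
proof -
  have "(\<integral>x. g x \<partial>M)
          = (\<integral>x. b 0 + (\<Sum>j=1..K. (b j - b (j - 1)) * indicator {x \<in> space M. b j \<le> g x} x) \<partial>M)"
  proof (intro Bochner_Integration.integral_cong refl)
    fix x assume x: "x \<in> space M"
    then obtain m where m: "m \<le> K" "g x = b m" using range by fastforce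
    have "indicator {x \<in> space M. b j \<le> g x} x = (if b j \<le> b m then 1 else 0 :: real)" for j
      using x m by (simp add: indicator_def)
    then show "g x = b 0 + (\<Sum>j=1..K. (b j - b (j - 1)) * indicator {x \<in> space M. b j \<le> g x} x)"
      unfolding m(2) by (simp only: layer_sum_eq[OF mono m(1), symmetric])
  qed
  also have "\<dots> = b 0 + (\<Sum>j=1..K. (b j - b (j - 1)) * prob {x \<in> space M. b j \<le> g x})"
  proof -
    have int: "integrable M (\<lambda>x. indicator {x \<in> space M. b j \<le> g x} x :: real)" for j
      by (intro integrable_real_indicator) (auto simp: emeasure_eq_measure)
    then show ?thesis
      by (simp add: Bochner_Integration.integral_sum prob_space del: sum_mult_indicator)
  qed
  finally show ?thesis .
qed

lemma integral_integral_eq_layer_sum: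
  fixes f :: "'h \<Rightarrow> 'z \<Rightarrow> real" and b :: "nat \<Rightarrow> real"
  assumes "prob_space N" "prob_space D" and mono: "\<forall>j<K. b j < b (Suc j)"
    and f_meas: "(\<lambda>(h, z). f h z) \<in> borel_measurable (N \<Otimes>\<^sub>M D)"
    and range: "\<And>h z. h \<in> space N \<Longrightarrow> z \<in> space D \<Longrightarrow> f h z \<in> b ` {0..K}"
  shows "(\<integral>h. (\<integral>z. f h z \<partial>D) \<partial>N)
           = b 0 + (\<Sum>j=1..K. (b j - b (j - 1)) * (\<integral>h. measure D {z \<in> space D. b j \<le> f h z} \<partial>N))"
proof -
  interpret N: prob_space N by fact
  interpret D: prob_space D by fact
  have [measurable]: "(\<lambda>x. f (fst x) (snd x)) \<in> borel_measurable (N \<Otimes>\<^sub>M D)"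
    using f_meas by (simp add: case_prod_beta')
  have [measurable]: "(\<lambda>h. measure D {z \<in> space D. b j \<le> f h z}) \<in> borel_measurable N" for j
    by (rule measurable_measure_section[OF D.sigma_finite_measure_axioms]) measurable
  have "(\<integral>h. (\<integral>z. f h z \<partial>D) \<partial>N)
          = (\<integral>h. b 0 + (\<Sum>j=1..K. (b j - b (j - 1)) * measure D {z \<in> space D. b j \<le> f h z}) \<partial>N)"
    using measurable_Pair2[OF f_meas] range
    by (intro Bochner_Integration.integral_cong refl D.integral_eq_layer_sum[OF mono]) auto
  also have "\<dots> = b 0 + (\<Sum>j=1..K. (b j - b (j - 1)) * (\<integral>h. measure D {z \<in> space D. b j \<le> f h z} \<partial>N))"
    by (simp add: Bochner_Integration.integral_sum N.prob_space N.integrable_unit_interval)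
  finally show ?thesis .
qed

lemma pac_bayes_kl_events:
  fixes \<pi> :: "'h measure" and D :: "'z measure" and P :: "nat \<Rightarrow> 'h \<Rightarrow> 'z \<Rightarrow> bool"
  assumes \<pi>: "prob_space \<pi>" and D: "prob_space D" and n: "n \<ge> 1" and K: "K \<ge> 1" and \<delta>: "\<delta> > 0"
    and P: "\<And>j. Measurable.pred (\<pi> \<Otimes>\<^sub>M D) (\<lambda>(h, z). P j h z)"
  shows "\<exists>A \<in> sets (PiM {..<n} (\<lambda>_. D)). measure (PiM {..<n} (\<lambda>_. D)) A \<le> \<delta> \<and>
           (\<forall>S \<in> space (PiM {..<n} (\<lambda>_. D)) - A. \<forall>j \<in> {1..K}. \<forall>\<rho> \<in> prob_dists \<pi>.
              (\<integral>h. measure D {z \<in> space D. P j h z} \<partial>\<rho>)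
                \<le> kl_inv_plus (\<integral>h. (1 / real n) * (\<Sum>i<n. if P j h (S i) then 1 else 0) \<partial>\<rho>)
                     ((KL_div \<rho> \<pi> + ereal (ln (2 * real K * sqrt (real n) / \<delta>))) / ereal (real n)))"
proof -
  let ?M = "PiM {..<n} (\<lambda>_. D)" and ?t = "2 * real K * sqrt (real n) / \<delta>"
  interpret M: prob_space ?M by (intro prob_space_PiM D)
  have t: "?t > 0" and bound: "2 * sqrt (real n) / ?t = \<delta> / real K"
    using K n \<delta> by (auto simp: field_simps)
  let ?good = "\<lambda>j B. emeasure ?M B \<le> ennreal (\<delta> / real K) \<and>
      (\<forall>S \<in> space ?M - B. \<forall>\<rho> \<in> prob_dists \<pi>.
         (\<integral>h. measure D {z \<in> space D. P j h z} \<partial>\<rho>)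
           \<le> kl_inv_plus (\<integral>h. (1 / real n) * (\<Sum>i<n. if P j h (S i) then 1 else 0) \<partial>\<rho>)
                ((KL_div \<rho> \<pi> + ereal (ln ?t)) / ereal (real n)))"
  have "\<forall>j. \<exists>B \<in> sets ?M. ?good j B"
    using pac_bayes_kl_event[OF \<pi> D n t P] unfolding bound by blast
  then obtain B where B: "\<forall>j. B j \<in> sets ?M \<and> ?good j (B j)"
    unfolding Bex_def by (rule choice[THEN exE])
  define A where "A = (\<Union>j\<in>{1..K}. B j)"
  have "emeasure ?M A \<le> (\<Sum>j\<in>{1..K}. emeasure ?M (B j))"
    unfolding A_def using B by (intro emeasure_subadditive_finite) auto
  also have "\<dots> \<le> (\<Sum>j\<in>{1..K}. ennreal (\<delta> / real K))"
    using B by (intro sum_mono) auto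
  also have "\<dots> = ennreal \<delta>"
    using K \<delta> by (simp add: ennreal_of_nat_eq_real_of_nat flip: ennreal_mult)
  finally have "measure ?M A \<le> \<delta>"
    using \<delta> by (simp add: M.emeasure_eq_measure)
  moreover have "A \<in> sets ?M" using B by (auto simp: A_def)
  ultimately show ?thesis using B unfolding A_def by blast
qed

theorem theorem3p4:
  fixes MH :: "'h measure" and D :: "'z measure" and \<pi> :: "'h measure"
    and b :: "nat \<Rightarrow> real" and K n :: nat and f :: "'h \<Rightarrow> 'z \<Rightarrow> real" and \<delta> :: real
  assumes D: "prob_space D"
    and K: "K \<ge> 1"
    and b_mono: "\<forall>j<K. b j < b (Suc j)"
    and f_range: "\<forall>h\<in>space MH. \<forall>z\<in>space D. f h z \<in> b ` {0..K}"
    and f_meas: "(\<lambda>(h, z). f h z) \<in> borel_measurable (MH \<Otimes>\<^sub>M D)"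
    and n: "n \<ge> 1"
    and \<pi>: "\<pi> \<in> prob_dists MH"
    and \<delta>: "0 < \<delta>" "\<delta> < 1"
  shows "\<exists>A \<in> sets (PiM {..<n} (\<lambda>_. D)).
     {S \<in> space (PiM {..<n} (\<lambda>_. D)).
        \<exists>\<rho> \<in> prob_dists MH.
          (\<integral>h. (\<integral>z. f h z \<partial>D) \<partial>\<rho>) >
          b 0 + (\<Sum>j=1..K. (b j - b (j - 1)) *
             kl_inv_plus
               (\<integral>h. (1 / real n) * (\<Sum>i<n. if f h (S i) \<ge> b j then 1 else 0) \<partial>\<rho>)
               ((KL_div \<rho> \<pi> + ereal (ln (2 * real K * sqrt (real n) / \<delta>))) / ereal (real n)))}
       \<subseteq> A
     \<and> measure (PiM {..<n} (\<lambda>_. D)) A \<le> \<delta>"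
proof -
  let ?M = "PiM {..<n} (\<lambda>_. D)"
  let ?p = "\<lambda>j \<rho>. \<integral>h. measure D {z \<in> space D. b j \<le> f h z} \<partial>\<rho>"
  let ?q = "\<lambda>j S \<rho>. \<integral>h. (1 / real n) * (\<Sum>i<n. if b j \<le> f h (S i) then 1 else 0) \<partial>\<rho>"
  let ?\<epsilon> = "\<lambda>\<rho>. (KL_div \<rho> \<pi> + ereal (ln (2 * real K * sqrt (real n) / \<delta>))) / ereal (real n)"
  have f_meas': "(\<lambda>(h, z). f h z) \<in> borel_measurable (\<rho> \<Otimes>\<^sub>M D)" if "\<rho> \<in> prob_dists MH" for \<rho>
    using f_meas that by (subst measurable_cong_sets[OF sets_pair_measure_cong refl])
      (auto simp: prob_dists_def)
  have "prob_dists MH = prob_dists \<pi>" and "prob_space \<pi>"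
    using \<pi> by (auto simp: prob_dists_def)
  with pac_bayes_kl_events[OF _ D n K \<delta>(1), of \<pi> "\<lambda>j h z. b j \<le> f h z"] f_meas'[OF \<pi>]
  obtain A where A: "A \<in> sets ?M" "measure ?M A \<le> \<delta>"
    and bounds: "\<And>S j \<rho>. S \<in> space ?M - A \<Longrightarrow> j \<in> {1..K} \<Longrightarrow> \<rho> \<in> prob_dists MH \<Longrightarrow>
                   ?p j \<rho> \<le> kl_inv_plus (?q j S \<rho>) (?\<epsilon> \<rho>)"
    by (auto simp: case_prod_beta')
  have "(\<integral>h. (\<integral>z. f h z \<partial>D) \<partial>\<rho>)
          \<le> b 0 + (\<Sum>j=1..K. (b j - b (j - 1)) * kl_inv_plus (?q j S \<rho>) (?\<epsilon> \<rho>))"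
    if S: "S \<in> space ?M - A" and \<rho>: "\<rho> \<in> prob_dists MH" for S \<rho>
  proof -
    have "(\<integral>h. (\<integral>z. f h z \<partial>D) \<partial>\<rho>) = b 0 + (\<Sum>j=1..K. (b j - b (j - 1)) * ?p j \<rho>)"
      using f_range f_meas'[OF \<rho>] \<rho> sets_eq_imp_space_eq[of \<rho> MH]
      by (intro integral_integral_eq_layer_sum[OF _ D b_mono]) (auto simp: prob_dists_def)
    also have "\<dots> \<le> b 0 + (\<Sum>j=1..K. (b j - b (j - 1)) * kl_inv_plus (?q j S \<rho>) (?\<epsilon> \<rho>))"
    proof (intro add_left_mono sum_mono mult_left_mono)
      fix j assume j: "j \<in> {1..K}"
      show "?p j \<rho> \<le> kl_inv_plus (?q j S \<rho>) (?\<epsilon> \<rho>)" by (rule bounds[OF S j \<rho>])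
      show "0 \<le> b j - b (j - 1)" using j b_mono[rule_format, of "j - 1"] by force
    qed
    finally show ?thesis .
  qed
  then show ?thesis using A by (blast dest: leD)
qed

end
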